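(* Let $3\le n\le k$ be integers and let $X$ be the discrete-time Markov chain on $\mathbb{N}^{n-1}$ described in the context. Fix $j\in\{1,\dots,n-1\}$ and let $\mathbf{x}_j=(0,\dots,0,x_{j+1},\dots,x_{n-1})$ with the first $j$ entries equal to $0$ and $x_i\ge1$ for $i=j+1,\dots,n-1$. Then for every $\mathbf{r}=(r_1,\dots,r_{n-1})\in E_j$, setting $\mathbf{r}(\mathbf{x}_j)=\mathbf{x}_j+\mathbf{r}\in S^\star$, $$q^\star(\mathbf{x}_j,\mathbf{r}(\mathbf{x}_j))=\binom{k-n+j+1}{k-n+1}\frac{(|\mathbf{r}|-1)!}{r_1!\cdots r_{n-1}!}\Big(\frac1k\Big)^{|\mathbf{r}|}\sum_{l=1}^{j}\mathds{1}_{\{r_l=1\}},$$ and $\sum_{\mathbf{r}\in E_j}q^\star(\mathbf{x}_j,\mathbf{r}(\mathbf{x}_j))=1$. Moreover, $q^\star(\mathbf{x}_j,\mathbf{x}')=0$ for every $\mathbf{x}'\in S^\star$ that is not of the form $\mathbf{x}_j+\mathbf{r}$ with $\mathbf{r}\in E_j$.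
   Context: $\mathbb{N}=\{0,1,2,\dots\}$, $|\mathbf{r}|=r_1+\dots+r_{n-1}$. $\mathbf{0}$, $\mathbf{1}$ are the all-zero and all-one vectors of dimension $n-1$, $\mathbf{e}_l$ the $l$-th unit vector. For $j=0,\dots,n-1$, $R_j$ is the set of $\mathbf{x}\in\mathbb{N}^{n-1}$ with exactly $j$ zero entries. $X$ is the Markov chain on $\mathbb{N}^{n-1}$ with nonzero transition probabilities: from $\mathbf{x}\in R_0$, to $\mathbf{x}-\mathbf{1}$ w.p. $\frac{k-(n-1)}{k}$ and to $\mathbf{x}+\mathbf{e}_l$ w.p. $\frac1k$ ($l=1,\dots,n-1$); from $\mathbf{x}\in R_j$, $1\le j\le n-2$, to $\mathbf{x}+\mathbf{e}_l$ w.p. $\frac{k-(n-1-j)}{kj}$ if $x_l=0$ and w.p. $\frac1k$ if $x_l\ge1$; from $\mathbf{0}$ to $\mathbf{e}_l$ w.p. $\frac1{n-1}$. Let $S=\{\mathbf{x}\in\mathbb{N}^{n-1}:x_i\ge1\ \forall i\}$, $S^c$ its complement in $\mathbb{N}^{n-1}$, and $S^\star=\{\mathbf{x}\in S:\mathbf{x}-\mathbf{1}\notin S\}$ (elements of $S$ with at least one entry equal to $1$). For $\mathbf{x}\in S^c$ and $\mathbf{y}\in S^\star$, $q^\star(\mathbf{x},\mathbf{y})$ is the probability that $X$ started at $\mathbf{x}$ first enters $S$ at the state $\mathbf{y}$. For $j=1,\dots,n-1$, $E_j$ is the set of $\mathbf{r}\in\mathbb{N}^{n-1}$ with $r_i\ge1$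 for $1\le i\le j$, $r_l\ge0$ for $j<l\le n-1$, and at least one of $r_1,\dots,r_j$ equal to $1$. *)

theory Defs
  imports "HOL-Analysis.Analysis"
begin

text \<open>States of the chain on N^(n-1) are functions nat => nat whose coordinates
  1..n-1 carry the entries; all other coordinates are 0.\<close>

definition valid :: "nat \<Rightarrow> (nat \<Rightarrow> nat) \<Rightarrow> bool" where
  "valid n x \<longleftrightarrow> (\<forall>i. i \<notin> {1..n-1} \<longrightarrow> x i = 0)"

definition nzeros :: "nat \<Rightarrow> (nat \<Rightarrow> nat) \<Rightarrow> nat" where
  "nzeros n x = card {i\<in>{1..n-1}. x i = 0}"

definition trans_prob :: "nat \<Rightarrow> nat \<Rightarrow> (nat \<Rightarrow> nat) \<Rightarrow> (nat \<Rightarrow> nat) \<Rightarrow> real" where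
  "trans_prob n k x y =
    (let j = nzeros n x in
     if j = 0 then
       (if y = (\<lambda>i. x i - 1) then (real k - (real n - 1)) / real k else 0)
       + (\<Sum>l\<in>{1..n-1}. if y = x(l := Suc (x l)) then 1 / real k else 0)
     else if j \<le> n - 2 then
       (\<Sum>l\<in>{1..n-1}. if y = x(l := Suc (x l)) then
          (if x l = 0 then (real k - (real n - 1 - real j)) / (real k * real j) else 1 / real k)
        else 0)
     else
       (\<Sum>l\<in>{1..n-1}. if y = x(l := Suc (x l)) then 1 / (real n - 1) else 0))"

text \<open>All possible successors of a state (a finite set containing the support of trans_prob).\<close>
definition succs :: "nat \<Rightarrow> (nat \<Rightarrow> nat) \<Rightarrow> (nat \<Rightarrow> nat) set" where
  "succs n x = insert (\<lambda>i. x i - 1) ((\<lambda>l. x(l := Suc (x l))) ` {1..n-1})"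

definition S_set :: "nat \<Rightarrow> (nat \<Rightarrow> nat) set" where
  "S_set n = {x. valid n x \<and> (\<forall>i\<in>{1..n-1}. 1 \<le> x i)}"

definition Sstar :: "nat \<Rightarrow> (nat \<Rightarrow> nat) set" where
  "Sstar n = {x \<in> S_set n. \<exists>i\<in>{1..n-1}. x i = 1}"

definition E_set :: "nat \<Rightarrow> nat \<Rightarrow> (nat \<Rightarrow> nat) set" where
  "E_set n j = {r. valid n r \<and> (\<forall>i\<in>{1..j}. 1 \<le> r i) \<and> (\<exists>i\<in>{1..j}. r i = 1)}"

definition rsum :: "nat \<Rightarrow> (nat \<Rightarrow> nat) \<Rightarrow> nat" where
  "rsum n r = (\<Sum>i\<in>{1..n-1}. r i)"

text \<open>first_entry n k m x y: probability that X started at x first enters S at time m,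
  and does so at state y.\<close>
primrec first_entry :: "nat \<Rightarrow> nat \<Rightarrow> nat \<Rightarrow> (nat \<Rightarrow> nat) \<Rightarrow> (nat \<Rightarrow> nat) \<Rightarrow> real" where
  "first_entry n k 0 x y = (if x \<in> S_set n \<and> x = y then 1 else 0)"
| "first_entry n k (Suc m) x y =
     (if x \<in> S_set n then 0
      else (\<Sum>z\<in>succs n x. trans_prob n k x z * first_entry n k m z y))"

definition q_star :: "nat \<Rightarrow> nat \<Rightarrow> (nat \<Rightarrow> nat) \<Rightarrow> (nat \<Rightarrow> nat) \<Rightarrow> real" where
  "q_star n k x y = (\<Sum>m. first_entry n k m x y)"

end

theory Submission
  imports Defs
begin

text \<open>Outside S the chain only moves by unit steps z \<mapsto> z + e_l, so a path from z that first
  enters S at z + r takes exactly |r| steps, and its last step fills the last zero coordinate,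
  which therefore equals 1. Conditioning on the first step turns the first-entry probability into
  a recursion in |r|. The closed form satisfies it because of two identities: the step probability
  into a zero coordinate times the binomial coefficient of the new state is the binomial
  coefficient of the old state divided by k, and summing r_l times the number of coordinates
  equal to 1 after the step at l gives (|r| - 1) times that number before. The probabilities sum
  to 1 since 2^(number of zeros) shrinks in expectation by the factor 1 - 1/(2k) per step,
  so the chain enters S almost surely.\<close>

lemma nonneg_has_sum_exhaustion:
  fixes f :: "'a \<Rightarrow> real"
  assumes nonneg: "\<And>x. x \<in> A \<Longrightarrow> 0 \<le> f x"
    and finite: "\<And>M. finite (B M)" and subset: "\<And>M. B M \<subseteq> A" and mono: "incseq B"
    and exhaust: "\<And>F. finite F \<Longrightarrow> F \<subseteq> A \<Longrightarrow> \<exists>M. F \<subseteq> B M"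
    and lim: "(\<lambda>M. sum f (B M)) \<longlonglongrightarrow> s"
  shows "(f has_sum s) A"
proof -
  have nonneg_B: "0 \<le> f b" if "b \<in> B M" for b M
    using that subset nonneg by blast
  have "incseq (\<lambda>M. sum f (B M))"
    unfolding incseq_def
  proof (intro allI impI)
    fix M N :: nat
    assume "M \<le> N"
    then have "B M \<subseteq> B N"
      using mono by (simp add: incseq_def)
    then show "sum f (B M) \<le> sum f (B N)"
      using finite nonneg_B by (intro sum_mono2) auto
  qed
  then have below_s: "sum f (B M) \<le> s" for M
    by (rule incseq_le[OF _ lim])
  have finite_le_s: "sum f F \<le> s" if F: "finite F" "F \<subseteq> A" for F
  proof -
    obtain M where "F \<subseteq> B M"
      using exhaust[OF F] by blast
    then have "sum f F \<le> sum f (B M)"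
      using finite nonneg_B by (intro sum_mono2) auto
    then show ?thesis
      using below_s[of M] by (rule order_trans)
  qed
  have summable: "f summable_on A"
    using nonneg finite_le_s by (intro nonneg_bdd_above_summable_on bdd_aboveI) auto
  have upper: "infsum f A \<le> s"
    using summable finite_le_s by (rule infsum_le_finite_sums)
  have "sum f (B M) \<le> infsum f A" for M
    using summable finite subset by (rule finite_sum_le_infsum) (simp add: nonneg)
  then have lower: "s \<le> infsum f A"
    using lim by (intro LIMSEQ_le_const2[of _ s]) auto
  from upper lower have "infsum f A = s"
    by (rule antisym)
  then show ?thesis
    using has_sum_infsum[OF summable] by simp
qed

abbreviation incr :: "(nat \<Rightarrow> nat) \<Rightarrow> nat \<Rightarrow> nat \<Rightarrow> nat" where
  "incr z l \<equiv> z(l := Suc (z l))"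

definition zero_coords :: "nat \<Rightarrow> (nat \<Rightarrow> nat) \<Rightarrow> nat set" where
  "zero_coords n z = {i\<in>{1..n-1}. z i = 0}"

text \<open>The paper's (k - (n-1-j)) / (k j) at a zero coordinate of a state with j = nzeros n z \<ge> 1
  zeros, written so that the natural-number subtraction is exact for n \<le> k; at z = 0 it gives
  1/(n-1), as it should.\<close>
definition step_prob :: "nat \<Rightarrow> nat \<Rightarrow> (nat \<Rightarrow> nat) \<Rightarrow> nat \<Rightarrow> real" where
  "step_prob n k z l =
     (if z l = 0 then real (k - n + 1 + nzeros n z) / (real k * real (nzeros n z)) else 1 / real k)"

text \<open>survival n k m z is the probability that X started at z stays outside S at the
  times 0, ..., m - 1.\<close>
primrec survival :: "nat \<Rightarrow> nat \<Rightarrow> nat \<Rightarrow> (nat \<Rightarrow> nat) \<Rightarrow> real" where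
  "survival n k 0 z = 1"
| "survival n k (Suc m) z =
     (if z \<in> S_set n then 0 else (\<Sum>l\<in>{1..n-1}. step_prob n k z l * survival n k m (incr z l)))"

definition entry_formula :: "nat \<Rightarrow> nat \<Rightarrow> (nat \<Rightarrow> nat) \<Rightarrow> (nat \<Rightarrow> nat) \<Rightarrow> real" where
  "entry_formula n k z r =
     real ((k - n + 1 + nzeros n z) choose nzeros n z)
     * (fact (rsum n r - 1) / (\<Prod>i\<in>{1..n-1}. fact (r i)))
     * (1 / real k) ^ rsum n r
     * real (card {l\<in>zero_coords n z. r l = 1})"

lemma nzeros_eq_card: "nzeros n z = card (zero_coords n z)"
  by (simp add: nzeros_def zero_coords_def)

lemma finite_zero_coords [simp]: "finite (zero_coords n z)"
  by (simp add: zero_coords_def)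

lemma zero_coords_subset: "zero_coords n z \<subseteq> {1..n-1}"
  by (auto simp: zero_coords_def)

lemma nzeros_le: "nzeros n z \<le> n - 1"
  unfolding nzeros_eq_card using card_mono[OF _ zero_coords_subset] by fastforce

lemma S_set_iff_zero_coords_empty:
  assumes "valid n z"
  shows "z \<in> S_set n \<longleftrightarrow> zero_coords n z = {}"
proof -
  have "z \<in> S_set n \<longleftrightarrow> (\<forall>i\<in>{1..n-1}. z i \<noteq> 0)"
    using assms by (auto simp: S_set_def Suc_le_eq)
  also have "\<dots> \<longleftrightarrow> zero_coords n z = {}"
    by (auto simp: zero_coords_def)
  finally show ?thesis .
qed

lemma valid_incr: "valid n z \<Longrightarrow> l \<in> {1..n-1} \<Longrightarrow> valid n (incr z l)"
  by (auto simp: valid_def)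

lemma zero_coords_incr: "l \<in> {1..n-1} \<Longrightarrow> zero_coords n (incr z l) = zero_coords n z - {l}"
  by (auto simp: zero_coords_def)

lemma nzeros_incr:
  "l \<in> {1..n-1} \<Longrightarrow> nzeros n (incr z l) = (if z l = 0 then nzeros n z - 1 else nzeros n z)"
  unfolding nzeros_eq_card zero_coords_incr card_Diff_singleton_if
  by (simp add: zero_coords_def)

lemma rsum_upd:
  assumes "l \<in> {1..n-1}"
  shows "rsum n (r(l := a)) + r l = rsum n r + a"
proof -
  have "rsum n (r(l := a)) = a + (\<Sum>i\<in>{1..n-1}-{l}. r i)"
    unfolding rsum_def using assms by (simp add: sum.remove)
  moreover have "rsum n r = r l + (\<Sum>i\<in>{1..n-1}-{l}. r i)"
    unfolding rsum_def using assms by (simp add: sum.remove)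
  ultimately show ?thesis
    by simp
qed

lemma prod_fact_decr:
  fixes r :: "nat \<Rightarrow> nat"
  assumes l: "l \<in> {1..n-1}" and "1 \<le> r l"
  shows "(\<Prod>i\<in>{1..n-1}. fact (r i)) = real (r l) * (\<Prod>i\<in>{1..n-1}. fact ((r(l := r l - 1)) i))"
proof -
  have split: "prod g {1..n-1} = g l * prod g ({1..n-1} - {l})" for g :: "nat \<Rightarrow> real"
    using l by (intro prod.remove) simp_all
  have before: "(\<Prod>i\<in>{1..n-1}. fact (r i)) = fact (r l) * (\<Prod>i\<in>{1..n-1} - {l}. fact (r i) :: real)"
    by (rule split)
  have "(\<Prod>i\<in>{1..n-1}. fact ((r(l := r l - 1)) i))
      = fact ((r(l := r l - 1)) l) * (\<Prod>i\<in>{1..n-1} - {l}. fact ((r(l := r l - 1)) i) :: real)"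
    by (rule split)
  also have "(\<Prod>i\<in>{1..n-1} - {l}. fact ((r(l := r l - 1)) i)) = (\<Prod>i\<in>{1..n-1} - {l}. fact (r i) :: real)"
    by (rule prod.cong) auto
  also have "fact ((r(l := r l - 1)) l) = (fact (r l - 1) :: real)"
    by simp
  finally have after: "(\<Prod>i\<in>{1..n-1}. fact ((r(l := r l - 1)) i))
      = fact (r l - 1) * (\<Prod>i\<in>{1..n-1} - {l}. fact (r i) :: real)" .
  have "fact (r l) = real (r l) * (fact (r l - 1) :: real)"
    using assms(2) by (simp add: fact_reduce)
  then show ?thesis
    by (simp only: before after mult.assoc)
qed

lemma finite_rsum_le: "finite {r. valid n r \<and> rsum n r \<le> M}"
proof (rule finite_subset)
  show "{r. valid n r \<and> rsum n r \<le> M}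
      \<subseteq> {r. \<forall>i. (i \<in> {1..n-1} \<longrightarrow> r i \<in> {..M}) \<and> (i \<notin> {1..n-1} \<longrightarrow> r i = 0)}"
  proof (intro subsetI CollectI allI conjI impI)
    fix r i
    assume r: "r \<in> {r. valid n r \<and> rsum n r \<le> M}"
    show "r i \<in> {..M}" if "i \<in> {1..n-1}"
    proof -
      have "r i \<le> rsum n r"
        unfolding rsum_def using that by (intro member_le_sum) simp_all
      with r show ?thesis
        by simp
    qed
    show "r i = 0" if "i \<notin> {1..n-1}"
      using r that by (simp add: valid_def)
  qed
  show "finite {r. \<forall>i. (i \<in> {1..n-1} \<longrightarrow> r i \<in> {..M}) \<and> (i \<notin> {1..n-1} \<longrightarrow> r i = (0::nat))}"
    by (rule finite_set_of_finite_funs) simp_all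
qed

lemma rsum_eq_one_imp_unit:
  assumes "valid n r" and l: "l \<in> {1..n-1}" and "1 \<le> r l" and "rsum n r = 1"
  shows "r = (\<lambda>i. if i = l then 1 else 0)"
proof -
  have "rsum n (r(l := 0)) + r l = 1"
    using rsum_upd[OF l, of r 0] assms(4) by simp
  with assms(3) have "r l = 1" and "rsum n (r(l := 0)) = 0"
    by linarith+
  then have rest_zero: "\<forall>i\<in>{1..n-1}. (r(l := 0)) i = 0"
    by (simp add: rsum_def)
  show ?thesis
  proof
    fix i
    show "r i = (if i = l then 1 else 0)"
    proof (cases "i \<in> {1..n-1}")
      case True
      then have "(r(l := 0)) i = 0"
        using rest_zero by blast
      with \<open>r l = 1\<close> show ?thesis
        by (cases "i = l") simp_all
    next
      case False
      with assms(1) l show ?thesis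
        by (auto simp: valid_def)
    qed
  qed
qed

lemma step_prob_nonneg: "0 \<le> step_prob n k z l"
  by (simp add: step_prob_def)

lemma first_entry_S_set: "z \<in> S_set n \<Longrightarrow> first_entry n k m z y = (if m = 0 \<and> y = z then 1 else 0)"
  by (cases m) auto

lemma survival_nonneg: "0 \<le> survival n k m z"
  by (induction m arbitrary: z) (auto intro!: sum_nonneg mult_nonneg_nonneg step_prob_nonneg)

lemma sum_unit_coords_decr:
  "(\<Sum>l\<in>{1..n-1}. r l * card {i\<in>zero_coords n (incr z l). (r(l := r l - 1)) i = 1})
     + card {i\<in>zero_coords n z. r i = 1}
   = rsum n r * card {i\<in>zero_coords n z. r i = 1}"
proof -
  define C where "C = {i\<in>zero_coords n z. r i = 1}"
  have C_subset: "C \<subseteq> {1..n-1}"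
    using zero_coords_subset[of n z] by (auto simp: C_def)
  then have "finite C"
    by (rule finite_subset) simp
  have summand: "r l * card {i\<in>zero_coords n (incr z l). (r(l := r l - 1)) i = 1} + (if l \<in> C then 1 else 0)
      = r l * card C" if l: "l \<in> {1..n-1}" for l
  proof -
    have "{i\<in>zero_coords n (incr z l). (r(l := r l - 1)) i = 1} = C - {l}"
      unfolding C_def zero_coords_incr[OF l] by auto
    moreover have "r l = 1" and "card C \<noteq> 0" if "l \<in> C"
      using that \<open>finite C\<close> by (auto simp: C_def)
    ultimately show ?thesis
      by (simp add: card_Diff_singleton_if)
  qed
  have "(\<Sum>l\<in>{1..n-1}. if l \<in> C then 1 else 0) = card C"
  proof -
    have "{l\<in>{1..n-1}. l \<in> C} = C"
      using C_subset by blast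
    then show ?thesis
      by (simp flip: sum.inter_filter)
  qed
  then have "(\<Sum>l\<in>{1..n-1}. r l * card {i\<in>zero_coords n (incr z l). (r(l := r l - 1)) i = 1}) + card C
      = (\<Sum>l\<in>{1..n-1}. r l * card {i\<in>zero_coords n (incr z l). (r(l := r l - 1)) i = 1} + (if l \<in> C then 1 else 0))"
    by (simp add: sum.distrib)
  also have "\<dots> = (\<Sum>l\<in>{1..n-1}. r l * card C)"
    using summand by (rule sum.cong[OF refl])
  finally show ?thesis
    by (simp add: C_def rsum_def sum_distrib_right)
qed

lemma zero_coords_eq_block:
  assumes "j \<le> n - 1" and "\<forall>i\<in>{1..j}. x i = 0" and "\<forall>i\<in>{j+1..n-1}. 1 \<le> x i"
  shows "zero_coords n x = {1..j}"
proof (intro equalityI subsetI)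
  fix i
  assume "i \<in> zero_coords n x"
  then have "i \<in> {1..n-1}" and "x i = 0"
    by (simp_all add: zero_coords_def)
  show "i \<in> {1..j}"
  proof (rule ccontr)
    assume "i \<notin> {1..j}"
    with \<open>i \<in> {1..n-1}\<close> have "i \<in> {j+1..n-1}"
      by auto
    with assms(3) \<open>x i = 0\<close> show False
      by fastforce
  qed
next
  fix i
  assume "i \<in> {1..j}"
  with assms(1,2) show "i \<in> zero_coords n x"
    by (simp add: zero_coords_def)
qed

lemma entry_formula_block:
  assumes "zero_coords n x = {1..j}"
  shows "entry_formula n k x r = real ((k - n + j + 1) choose (k - n + 1))
    * (fact (rsum n r - 1) / (\<Prod>i\<in>{1..n-1}. fact (r i))) * (1 / real k) ^ rsum n r
    * real (card {l\<in>{1..j}. r l = 1})"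
proof -
  have "(k - n + 1 + j) choose j = (k - n + j + 1) choose (k - n + 1)"
    using binomial_symmetric[of j "k - n + 1 + j"] by (simp add: ac_simps)
  then show ?thesis
    by (simp add: entry_formula_def nzeros_eq_card assms)
qed

context
  fixes n k :: nat
  assumes two_le_n: "2 \<le> n" and n_le_k: "n \<le> k"
begin

lemma k_pos: "0 < k"
  using two_le_n n_le_k by simp

lemma trans_prob_outside_S:
  assumes "valid n z" and "z \<notin> S_set n"
  shows "trans_prob n k z w = (\<Sum>l\<in>{1..n-1}. if w = incr z l then step_prob n k z l else 0)"
proof -
  have "zero_coords n z \<noteq> {}"
    using assms S_set_iff_zero_coords_empty by blast
  then have J_pos: "nzeros n z \<noteq> 0"
    by (simp add: nzeros_eq_card)
  show ?thesis
  proof (cases "nzeros n z \<le> n - 2")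
    case True
    have numerator: "real k - (real n - 1 - real (nzeros n z)) = real (k - n + 1 + nzeros n z)"
      using n_le_k by (simp add: of_nat_diff)
    show ?thesis
      using J_pos True unfolding trans_prob_def Let_def step_prob_def numerator by simp
  next
    case False
    then have J: "nzeros n z = n - 1"
      using nzeros_le[of n z] by simp
    then have "zero_coords n z = {1..n-1}"
      using card_subset_eq[OF _ zero_coords_subset] by (simp add: nzeros_eq_card)
    then have "z l = 0" if "l \<in> {1..n-1}" for l
      using that unfolding zero_coords_def by blast
    moreover have "k - n + 1 + (n - 1) = k" and "real (n - 1) = real n - 1"
      using n_le_k two_le_n by (simp_all add: of_nat_diff)
    ultimately have step: "step_prob n k z l = 1 / (real n - 1)" if "l \<in> {1..n-1}" for l
      using that J k_pos by (simp add: step_prob_def)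
    have "trans_prob n k z w = (\<Sum>l\<in>{1..n-1}. if w = incr z l then 1 / (real n - 1) else 0)"
      using J_pos False unfolding trans_prob_def Let_def by simp
    also have "\<dots> = (\<Sum>l\<in>{1..n-1}. if w = incr z l then step_prob n k z l else 0)"
      using step by (intro sum.cong) auto
    finally show ?thesis .
  qed
qed

lemma first_entry_Suc_outside_S:
  assumes "valid n z" and "z \<notin> S_set n"
  shows "first_entry n k (Suc m) z y = (\<Sum>l\<in>{1..n-1}. step_prob n k z l * first_entry n k m (incr z l) y)"
proof -
  have "first_entry n k (Suc m) z y = (\<Sum>w\<in>succs n z. trans_prob n k z w * first_entry n k m w y)"
    using assms(2) by simp
  also have "\<dots> = (\<Sum>w\<in>succs n z. \<Sum>l\<in>{1..n-1}. if w = incr z l then step_prob n k z l * first_entry n k m w y else 0)"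
    unfolding trans_prob_outside_S[OF assms] sum_distrib_right by (intro sum.cong) auto
  also have "\<dots> = (\<Sum>l\<in>{1..n-1}. \<Sum>w\<in>succs n z. if w = incr z l then step_prob n k z l * first_entry n k m w y else 0)"
    by (rule sum.swap)
  also have "\<dots> = (\<Sum>l\<in>{1..n-1}. step_prob n k z l * first_entry n k m (incr z l) y)"
    by (intro sum.cong) (auto simp: sum.delta succs_def)
  finally show ?thesis .
qed

lemma step_prob_pos:
  assumes "l \<in> {1..n-1}"
  shows "0 < step_prob n k z l"
proof (cases "z l = 0")
  case True
  with assms have "l \<in> zero_coords n z"
    by (simp add: zero_coords_def)
  then have "0 < nzeros n z"
    by (auto simp: nzeros_eq_card card_gt_0_iff)
  with True k_pos show ?thesis
    by (simp add: step_prob_def)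
next
  case False
  with k_pos show ?thesis
    by (simp add: step_prob_def)
qed

lemma sum_step_prob_two_valued:
  assumes "zero_coords n z \<noteq> {}"
    and on_zeros: "\<And>l. l \<in> zero_coords n z \<Longrightarrow> g l = a"
    and off_zeros: "\<And>l. l \<in> {1..n-1} - zero_coords n z \<Longrightarrow> g l = b"
  shows "(\<Sum>l\<in>{1..n-1}. step_prob n k z l * g l)
    = (real (k - n + 1 + nzeros n z) * a + real (n - 1 - nzeros n z) * b) / real k"
proof -
  define Z where "Z = zero_coords n z"
  define J where "J = nzeros n z"
  have J_card: "J = card Z" and J_pos: "0 < J"
    using assms(1) by (simp_all add: J_def Z_def nzeros_eq_card card_gt_0_iff)
  have card_rest: "card ({1..n-1} - Z) = n - 1 - J"
    using card_Diff_subset[OF finite_zero_coords zero_coords_subset] by (simp add: Z_def J_card)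
  have "(\<Sum>l\<in>{1..n-1}. step_prob n k z l * g l)
      = (\<Sum>l\<in>{1..n-1} - Z. step_prob n k z l * g l) + (\<Sum>l\<in>Z. step_prob n k z l * g l)"
    unfolding Z_def by (rule sum.subset_diff[OF zero_coords_subset]) simp
  also have "(\<Sum>l\<in>Z. step_prob n k z l * g l) = (\<Sum>l\<in>Z. real (k - n + 1 + J) / (real k * real J) * a)"
  proof (rule sum.cong[OF refl])
    fix l
    assume "l \<in> Z"
    then have "z l = 0" and "g l = a"
      using on_zeros by (simp_all add: Z_def zero_coords_def)
    then show "step_prob n k z l * g l = real (k - n + 1 + J) / (real k * real J) * a"
      by (simp add: step_prob_def J_def)
  qed
  also have "(\<Sum>l\<in>{1..n-1} - Z. step_prob n k z l * g l) = (\<Sum>l\<in>{1..n-1} - Z. b / real k)"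
  proof (rule sum.cong[OF refl])
    fix l
    assume "l \<in> {1..n-1} - Z"
    then have "z l \<noteq> 0" and "g l = b"
      using off_zeros by (auto simp: Z_def zero_coords_def)
    then show "step_prob n k z l * g l = b / real k"
      by (simp add: step_prob_def)
  qed
  also have "(\<Sum>l\<in>Z. real (k - n + 1 + J) / (real k * real J) * a) = real (k - n + 1 + J) * a / real k"
    using J_pos k_pos by (simp add: J_card[symmetric])
  also have "(\<Sum>l\<in>{1..n-1} - Z. b / real k) = real (n - 1 - J) * b / real k"
    using card_rest by simp
  finally show ?thesis
    by (simp add: J_def add_divide_distrib)
qed

lemma sum_step_prob:
  assumes "zero_coords n z \<noteq> {}"
  shows "(\<Sum>l\<in>{1..n-1}. step_prob n k z l) = 1"
proof -
  have "k - n + 1 + nzeros n z + (n - 1 - nzeros n z) = k"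
    using nzeros_le[of n z] n_le_k two_le_n by simp
  then have "real (k - n + 1 + nzeros n z) + real (n - 1 - nzeros n z) = real k"
    by (metis of_nat_add)
  then show ?thesis
    using sum_step_prob_two_valued[OF assms, of "\<lambda>_. 1" 1 1] k_pos by simp
qed

lemma sum_step_prob_pow2_nzeros_le:
  assumes "zero_coords n z \<noteq> {}"
  shows "(\<Sum>l\<in>{1..n-1}. step_prob n k z l * 2 ^ nzeros n (incr z l))
    \<le> (1 - 1 / (2 * real k)) * 2 ^ nzeros n z"
proof -
  define J where "J = nzeros n z"
  define u :: real where "u = 2 ^ (J - 1)"
  have "0 < J"
    using assms by (simp add: J_def nzeros_eq_card card_gt_0_iff)
  then have pow_J: "2 ^ J = 2 * u"
    by (simp add: u_def power_eq_if)
  have on_zeros: "2 ^ nzeros n (incr z l) = u" if "l \<in> zero_coords n z" for l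
  proof -
    have "l \<in> {1..n-1}" and "z l = 0"
      using that by (simp_all add: zero_coords_def)
    then show ?thesis
      using nzeros_incr[of l n z] by (simp add: J_def u_def)
  qed
  have off_zeros: "2 ^ nzeros n (incr z l) = 2 * u" if "l \<in> {1..n-1} - zero_coords n z" for l
  proof -
    have "l \<in> {1..n-1}" and "z l \<noteq> 0"
      using that by (simp_all add: zero_coords_def)
    then show ?thesis
      using nzeros_incr[of l n z] pow_J by (simp add: J_def)
  qed
  have "(\<Sum>l\<in>{1..n-1}. step_prob n k z l * 2 ^ nzeros n (incr z l))
      = (real (k - n + 1 + J) * u + real (n - 1 - J) * (2 * u)) / real k"
    unfolding J_def by (rule sum_step_prob_two_valued[OF assms on_zeros off_zeros])
  also have "real (k - n + 1 + J) = real k - real n + 1 + real J"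
    using n_le_k by (simp add: of_nat_diff)
  also have "real (n - 1 - J) = real n - 1 - real J"
    using nzeros_le[of n z] \<open>0 < J\<close> by (simp add: J_def of_nat_diff)
  also have "((real k - real n + 1 + real J) * u + (real n - 1 - real J) * (2 * u)) / real k
      = (real k + real n - 1 - real J) * u / real k"
    by (simp add: algebra_simps)
  also have "\<dots> \<le> (2 * real k - 1) * u / real k"
    using n_le_k k_pos by (intro divide_right_mono mult_right_mono) (auto simp: u_def)
  also have "\<dots> = (1 - 1 / (2 * real k)) * 2 ^ J"
    using k_pos by (simp add: pow_J field_simps)
  finally show ?thesis
    by (simp only: J_def)
qed

lemma first_entry_nonneg: "valid n z \<Longrightarrow> 0 \<le> first_entry n k m z y"
proof (induction m arbitrary: z)
  case (Suc m)
  show ?case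
  proof (cases "z \<in> S_set n")
    case False
    show ?thesis
      unfolding first_entry_Suc_outside_S[OF Suc.prems False]
      by (intro sum_nonneg mult_nonneg_nonneg step_prob_nonneg Suc.IH valid_incr[OF Suc.prems])
  qed simp
qed simp

lemma first_entry_Suc_nonzeroE:
  assumes "valid n z" and "first_entry n k (Suc m) z y \<noteq> 0"
  obtains l where "z \<notin> S_set n" and "l \<in> {1..n-1}" and "first_entry n k m (incr z l) y \<noteq> 0"
proof -
  have outside: "z \<notin> S_set n"
    using assms(2) by auto
  then have "(\<Sum>l\<in>{1..n-1}. step_prob n k z l * first_entry n k m (incr z l) y) \<noteq> 0"
    using assms first_entry_Suc_outside_S by simp
  then obtain l where "l \<in> {1..n-1}" and "step_prob n k z l * first_entry n k m (incr z l) y \<noteq> 0"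
    by (rule sum.not_neutral_contains_not_neutral)
  with outside show ?thesis
    using that by simp
qed

lemma first_entry_Suc_nonzero_of_step:
  assumes "valid n z" and "z \<notin> S_set n" and l: "l \<in> {1..n-1}"
    and "first_entry n k m (incr z l) y \<noteq> 0"
  shows "first_entry n k (Suc m) z y \<noteq> 0"
proof -
  have "0 < step_prob n k z l * first_entry n k m (incr z l) y"
    using step_prob_pos[OF l] first_entry_nonneg[OF valid_incr[OF assms(1) l]] assms(4)
    by (simp add: order_less_le)
  also have "\<dots> \<le> (\<Sum>l\<in>{1..n-1}. step_prob n k z l * first_entry n k m (incr z l) y)"
    using l valid_incr[OF assms(1)]
    by (intro member_le_sum mult_nonneg_nonneg step_prob_nonneg first_entry_nonneg) simp_all
  also have "\<dots> = first_entry n k (Suc m) z y"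
    using first_entry_Suc_outside_S[OF assms(1,2)] by simp
  finally show ?thesis
    by simp
qed

lemma first_entry_nonzero_imp_increment:
  assumes "valid n z" and "first_entry n k m z y \<noteq> 0"
  shows "\<exists>r. valid n r \<and> rsum n r = m \<and> y = (\<lambda>i. z i + r i)"
  using assms
proof (induction m arbitrary: z)
  case 0
  then have "y = z"
    by (simp split: if_splits)
  then show ?case
    by (intro exI[of _ "\<lambda>_. 0"]) (simp add: valid_def rsum_def)
next
  case (Suc m)
  obtain l where l: "l \<in> {1..n-1}" and nonzero: "first_entry n k m (incr z l) y \<noteq> 0"
    using Suc.prems by (rule first_entry_Suc_nonzeroE)
  obtain r where r: "valid n r" "rsum n r = m" "y = (\<lambda>i. incr z l i + r i)"
    using Suc.IH[OF valid_incr[OF Suc.prems(1) l] nonzero] by blast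
  have "valid n (r(l := Suc (r l)))"
    using r(1) l by (simp add: valid_def)
  moreover have "rsum n (r(l := Suc (r l))) = Suc m"
    using rsum_upd[OF l, of r "Suc (r l)"] r(2) by simp
  moreover have "y = (\<lambda>i. z i + (r(l := Suc (r l))) i)"
    using r(3) by auto
  ultimately show ?case
    by blast
qed

lemma first_entry_eq_0_if_below:
  assumes "valid n w" and "y i < w i"
  shows "first_entry n k m w y = 0"
  using first_entry_nonzero_imp_increment[OF assms(1)] assms(2) by fastforce

lemma first_entry_nonzero_imp_hits_zero_coord:
  assumes "valid n z" and "z \<notin> S_set n" and "first_entry n k m z y \<noteq> 0"
  shows "y \<in> S_set n \<and> (\<exists>l\<in>zero_coords n z. y l = 1)"
  using assms
proof (induction m arbitrary: z)
  case (Suc m)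
  obtain l where l: "l \<in> {1..n-1}" and nonzero: "first_entry n k m (incr z l) y \<noteq> 0"
    using Suc.prems(1,3) by (rule first_entry_Suc_nonzeroE)
  have valid_w: "valid n (incr z l)"
    using Suc.prems(1) l by (rule valid_incr)
  show ?case
  proof (cases "incr z l \<in> S_set n")
    case True
    then have "y = incr z l"
      using nonzero first_entry_S_set by (metis (full_types))
    have "zero_coords n z - {l} = {}"
      using True S_set_iff_zero_coords_empty[OF valid_w] zero_coords_incr[OF l] by simp
    moreover have "zero_coords n z \<noteq> {}"
      using Suc.prems(1,2) S_set_iff_zero_coords_empty by blast
    ultimately have "l \<in> zero_coords n z"
      by blast
    then have "y l = 1"
      using \<open>y = incr z l\<close> by (simp add: zero_coords_def)
    then show ?thesis
      using True \<open>y = incr z l\<close> \<open>l \<in> zero_coords n z\<close> by blast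
  next
    case False
    with Suc.IH[OF valid_w False nonzero] show ?thesis
      using zero_coords_incr[OF l] by blast
  qed
qed simp

lemma q_star_eq_first_entry:
  assumes "valid n z"
  shows "q_star n k z (\<lambda>i. z i + r i) = first_entry n k (rsum n r) z (\<lambda>i. z i + r i)"
proof -
  have zero_elsewhere: "first_entry n k m z (\<lambda>i. z i + r i) = 0" if "m \<noteq> rsum n r" for m
  proof (rule ccontr)
    assume "first_entry n k m z (\<lambda>i. z i + r i) \<noteq> 0"
    then obtain r' where "rsum n r' = m" and shift_eq: "(\<lambda>i. z i + r i) = (\<lambda>i. z i + r' i)"
      using first_entry_nonzero_imp_increment[OF assms] by blast
    have "r' = r"
    proof
      fix i
      show "r' i = r i"
        using fun_cong[OF shift_eq, of i] by simp
    qed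
    with \<open>rsum n r' = m\<close> that show False
      by simp
  qed
  have "(\<lambda>m. first_entry n k m z (\<lambda>i. z i + r i))
      = (\<lambda>m. if m = rsum n r then first_entry n k m z (\<lambda>i. z i + r i) else 0)"
    using zero_elsewhere by (intro ext) simp
  then have "(\<lambda>m. first_entry n k m z (\<lambda>i. z i + r i)) sums first_entry n k (rsum n r) z (\<lambda>i. z i + r i)"
    using sums_single[of "rsum n r" "\<lambda>m. first_entry n k m z (\<lambda>i. z i + r i)"] by simp
  then show ?thesis
    unfolding q_star_def by (rule sums_unique[symmetric])
qed

lemma step_prob_mult_binomial:
  assumes l: "l \<in> {1..n-1}"
  shows "step_prob n k z l * real ((k - n + 1 + nzeros n (incr z l)) choose nzeros n (incr z l))
    = real ((k - n + 1 + nzeros n z) choose nzeros n z) / real k"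
proof (cases "z l = 0")
  case True
  define J where "J = nzeros n z"
  have "l \<in> zero_coords n z"
    using True l by (simp add: zero_coords_def)
  then have "0 < J"
    by (auto simp: J_def nzeros_eq_card card_gt_0_iff)
  have "J * ((k - n + 1 + J) choose J) = (k - n + 1 + J) * ((k - n + 1 + (J - 1)) choose (J - 1))"
    using times_binomial_minus1_eq[OF \<open>0 < J\<close>, of "k - n + 1 + J"] \<open>0 < J\<close> by simp
  then have absorption: "real (k - n + 1 + J) * real ((k - n + 1 + (J - 1)) choose (J - 1))
      = real J * real ((k - n + 1 + J) choose J)"
    by (metis of_nat_mult)
  have "nzeros n (incr z l) = J - 1"
    using nzeros_incr[OF l, of z] True by (simp add: J_def)
  then have "step_prob n k z l * real ((k - n + 1 + nzeros n (incr z l)) choose nzeros n (incr z l))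
      = real (k - n + 1 + J) * real ((k - n + 1 + (J - 1)) choose (J - 1)) / (real k * real J)"
    using True by (simp add: step_prob_def J_def)
  also have "\<dots> = real ((k - n + 1 + J) choose J) / real k"
    unfolding absorption using \<open>0 < J\<close> by simp
  finally show ?thesis
    by (simp only: J_def)
next
  case False
  then show ?thesis
    using nzeros_incr[OF l, of z] by (simp add: step_prob_def)
qed

lemma first_entry_one_incr:
  assumes "valid n z" and "z \<notin> S_set n" and l: "l \<in> {1..n-1}" and "incr z l \<in> S_set n"
  shows "first_entry n k 1 z (incr z l) = step_prob n k z l"
proof -
  have "incr z l' \<noteq> incr z l" if "l' \<noteq> l" for l'
  proof
    assume "incr z l' = incr z l"
    from fun_cong[OF this, of l'] that show False
      by simp
  qed
  with assms(4) have "step_prob n k z l' * first_entry n k 0 (incr z l') (incr z l)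
      = (if l' = l then step_prob n k z l else 0)" for l'
    by (cases "l' = l") simp_all
  then show ?thesis
    unfolding One_nat_def first_entry_Suc_outside_S[OF assms(1,2)]
    using l by (simp add: sum.delta)
qed

lemma first_entry_one_eq_entry_formula:
  assumes "valid n z" and "valid n r" and "\<forall>i\<in>zero_coords n z. 1 \<le> r i" and "rsum n r = 1"
  shows "first_entry n k 1 z (\<lambda>i. z i + r i) = entry_formula n k z r"
proof (cases "z \<in> S_set n")
  case True
  then have "zero_coords n z = {}"
    using S_set_iff_zero_coords_empty[OF assms(1)] by blast
  with True show ?thesis
    by (simp add: first_entry_S_set entry_formula_def)
next
  case False
  then obtain l where l: "l \<in> zero_coords n z"
    using S_set_iff_zero_coords_empty[OF assms(1)] by blast
  then have l_range: "l \<in> {1..n-1}" and "z l = 0" and "1 \<le> r l"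
    using assms(3) by (simp_all add: zero_coords_def)
  have r_unit: "r = (\<lambda>i. if i = l then 1 else 0)"
    using assms(2) l_range \<open>1 \<le> r l\<close> assms(4) by (rule rsum_eq_one_imp_unit)
  have zeros: "zero_coords n z = {l}"
  proof
    show "zero_coords n z \<subseteq> {l}"
    proof
      fix i
      assume "i \<in> zero_coords n z"
      then have "1 \<le> r i"
        using assms(3) by blast
      then show "i \<in> {l}"
        using r_unit by (simp split: if_splits)
    qed
  qed (use l in simp)
  have "incr z l \<in> S_set n"
    using S_set_iff_zero_coords_empty[OF valid_incr[OF assms(1) l_range]] zeros zero_coords_incr[OF l_range]
    by simp
  moreover have "(\<lambda>i. z i + r i) = incr z l"
    using \<open>z l = 0\<close> r_unit by (intro ext) simp
  ultimately have "first_entry n k 1 z (\<lambda>i. z i + r i) = step_prob n k z l"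
    using first_entry_one_incr[OF assms(1) False l_range] by simp
  also have "\<dots> = real (k - n + 1 + 1) / real k"
    using \<open>z l = 0\<close> zeros by (simp add: step_prob_def nzeros_eq_card)
  also have "\<dots> = entry_formula n k z r"
  proof -
    have "(\<Prod>i\<in>{1..n-1}. fact (r i) :: real) = 1"
      unfolding r_unit by (rule prod.neutral) simp
    moreover have "{i\<in>zero_coords n z. r i = 1} = {l}"
      using zeros r_unit by auto
    ultimately show ?thesis
      using zeros assms(4) by (simp add: entry_formula_def nzeros_eq_card)
  qed
  finally show ?thesis .
qed

lemma step_prob_mult_entry_formula:
  assumes l: "l \<in> {1..n-1}" and "1 \<le> r l" and "rsum n r = Suc (Suc m)"
  shows "step_prob n k z l * entry_formula n k (incr z l) (r(l := r l - 1))
    = real ((k - n + 1 + nzeros n z) choose nzeros n z) * fact m / (\<Prod>i\<in>{1..n-1}. fact (r i))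
      * (1 / real k) ^ Suc (Suc m)
      * real (r l * card {i\<in>zero_coords n (incr z l). (r(l := r l - 1)) i = 1})"
proof -
  define P where "P = (\<Prod>i\<in>{1..n-1}. fact ((r(l := r l - 1)) i) :: real)"
  have "0 < P"
    unfolding P_def by (rule prod_pos) simp
  have "rsum n (r(l := r l - 1)) = Suc m"
    using rsum_upd[OF l, of r "r l - 1"] assms(2,3) by simp
  moreover have "(\<Prod>i\<in>{1..n-1}. fact (r i)) = real (r l) * P"
    unfolding P_def using l assms(2) by (rule prod_fact_decr)
  ultimately show ?thesis
    using step_prob_mult_binomial[OF l, of z] assms(2) \<open>0 < P\<close> k_pos
    unfolding entry_formula_def P_def[symmetric]
    by (simp add: field_simps)
qed

lemma entry_formula_recursion:
  assumes "rsum n r = Suc (Suc m)"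
  shows "entry_formula n k z r = (\<Sum>l\<in>{1..n-1}.
    if r l = 0 then 0 else step_prob n k z l * entry_formula n k (incr z l) (r(l := r l - 1)))"
proof -
  define c where "c l = card {i\<in>zero_coords n (incr z l). (r(l := r l - 1)) i = 1}" for l
  define B where "B = real ((k - n + 1 + nzeros n z) choose nzeros n z) * fact m
    / (\<Prod>i\<in>{1..n-1}. fact (r i)) * (1 / real k) ^ Suc (Suc m)"
  have count: "(\<Sum>l\<in>{1..n-1}. r l * c l) = Suc m * card {i\<in>zero_coords n z. r i = 1}"
    using sum_unit_coords_decr[where n = n and r = r and z = z] assms by (simp add: c_def)
  have "0 < (\<Prod>i\<in>{1..n-1}. fact (r i) :: real)"
    by (rule prod_pos) simp
  then have "entry_formula n k z r = B * real (Suc m * card {i\<in>zero_coords n z. r i = 1})"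
    using assms k_pos by (simp add: B_def entry_formula_def field_simps)
  also have "\<dots> = (\<Sum>l\<in>{1..n-1}. B * real (r l * c l))"
    unfolding count[symmetric] by (simp add: sum_distrib_left)
  also have "\<dots> = (\<Sum>l\<in>{1..n-1}.
      if r l = 0 then 0 else step_prob n k z l * entry_formula n k (incr z l) (r(l := r l - 1)))"
    using step_prob_mult_entry_formula[OF _ _ assms] by (intro sum.cong) (simp_all add: B_def c_def)
  finally show ?thesis .
qed

lemma first_entry_eq_entry_formula:
  assumes "valid n z" and "valid n r" and "\<forall>i\<in>zero_coords n z. 1 \<le> r i" and "rsum n r = Suc m"
  shows "first_entry n k (Suc m) z (\<lambda>i. z i + r i) = entry_formula n k z r"
  using assms
proof (induction m arbitrary: z r)
  case 0
  then show ?case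
    using first_entry_one_eq_entry_formula by simp
next
  case (Suc m)
  show ?case
  proof (cases "z \<in> S_set n")
    case True
    then have "zero_coords n z = {}"
      using S_set_iff_zero_coords_empty[OF Suc.prems(1)] by blast
    with True show ?thesis
      by (simp add: first_entry_S_set entry_formula_def)
  next
    case False
    have "step_prob n k z l * first_entry n k (Suc m) (incr z l) (\<lambda>i. z i + r i)
        = (if r l = 0 then 0 else step_prob n k z l * entry_formula n k (incr z l) (r(l := r l - 1)))"
      if l: "l \<in> {1..n-1}" for l
    proof (cases "r l = 0")
      case True
      then have "first_entry n k (Suc m) (incr z l) (\<lambda>i. z i + r i) = 0"
        by (intro first_entry_eq_0_if_below[OF valid_incr[OF Suc.prems(1) l], of _ l]) simp
      with True show ?thesis
        by simp
    next
      case False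
      define r' where "r' = r(l := r l - 1)"
      have "(\<lambda>i. z i + r i) = (\<lambda>i. incr z l i + r' i)"
        using False by (intro ext) (simp add: r'_def)
      moreover have "first_entry n k (Suc m) (incr z l) (\<lambda>i. incr z l i + r' i) = entry_formula n k (incr z l) r'"
      proof (rule Suc.IH)
        show "valid n (incr z l)"
          using Suc.prems(1) l by (rule valid_incr)
        show "valid n r'"
          using Suc.prems(2) l by (simp add: r'_def valid_def)
        show "\<forall>i\<in>zero_coords n (incr z l). 1 \<le> r' i"
          using Suc.prems(3) by (simp add: zero_coords_incr[OF l] r'_def)
        show "rsum n r' = Suc m"
          using rsum_upd[OF l, of r "r l - 1"] Suc.prems(4) False by (simp add: r'_def)
      qed
      ultimately show ?thesis
        using False by (simp add: r'_def)
    qed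
    then show ?thesis
      unfolding first_entry_Suc_outside_S[OF Suc.prems(1) False] entry_formula_recursion[OF Suc.prems(4)]
      by (rule sum.cong[OF refl])
  qed
qed

lemma sum_first_entry_eq_survival_diff:
  assumes "valid n z" and "finite B" and "\<And>y. first_entry n k m z y \<noteq> 0 \<Longrightarrow> y \<in> B"
  shows "(\<Sum>y\<in>B. first_entry n k m z y) = survival n k m z - survival n k (Suc m) z"
  using assms
proof (induction m arbitrary: z)
  case 0
  show ?case
  proof (cases "z \<in> S_set n")
    case True
    then have "z \<in> B"
      using "0.prems"(3)[of z] by simp
    with True "0.prems"(2) show ?thesis
      by (simp add: sum.delta')
  next
    case False
    then have "zero_coords n z \<noteq> {}"
      using S_set_iff_zero_coords_empty[OF "0.prems"(1)] by blast
    with False show ?thesis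
      using sum_step_prob by simp
  qed
next
  case (Suc m)
  show ?case
  proof (cases "z \<in> S_set n")
    case True
    then show ?thesis
      by simp
  next
    case False
    have valid_w: "valid n (incr z l)" if "l \<in> {1..n-1}" for l
      using Suc.prems(1) that by (rule valid_incr)
    have support: "y \<in> B" if "l \<in> {1..n-1}" and "first_entry n k m (incr z l) y \<noteq> 0" for l y
      using first_entry_Suc_nonzero_of_step[OF Suc.prems(1) False that] Suc.prems(3) by blast
    have "(\<Sum>y\<in>B. first_entry n k (Suc m) z y)
        = (\<Sum>l\<in>{1..n-1}. step_prob n k z l * (\<Sum>y\<in>B. first_entry n k m (incr z l) y))"
      unfolding first_entry_Suc_outside_S[OF Suc.prems(1) False] sum_distrib_left
      by (rule sum.swap)
    also have "\<dots> = (\<Sum>l\<in>{1..n-1}. step_prob n k z l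
        * (survival n k m (incr z l) - survival n k (Suc m) (incr z l)))"
    proof (rule sum.cong[OF refl])
      fix l
      assume l: "l \<in> {1..n-1}"
      have "(\<Sum>y\<in>B. first_entry n k m (incr z l) y) = survival n k m (incr z l) - survival n k (Suc m) (incr z l)"
        using valid_w[OF l] Suc.prems(2) support[OF l] by (rule Suc.IH)
      then show "step_prob n k z l * (\<Sum>y\<in>B. first_entry n k m (incr z l) y)
          = step_prob n k z l * (survival n k m (incr z l) - survival n k (Suc m) (incr z l))"
        by (simp only:)
    qed
    also have "\<dots> = survival n k (Suc m) z - survival n k (Suc (Suc m)) z"
      using False by (simp add: right_diff_distrib sum_subtractf)
    finally show ?thesis .
  qed
qed

lemma survival_le:
  assumes "valid n z"
  shows "survival n k m z \<le> (1 - 1 / (2 * real k)) ^ m * 2 ^ nzeros n z"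
  using assms
proof (induction m arbitrary: z)
  case (Suc m)
  define \<rho> where "\<rho> = 1 - 1 / (2 * real k)"
  have "0 \<le> \<rho>"
    using k_pos by (simp add: \<rho>_def field_simps)
  show ?case
  proof (cases "z \<in> S_set n")
    case True
    with \<open>0 \<le> \<rho>\<close> show ?thesis
      by (simp add: \<rho>_def)
  next
    case False
    then have "zero_coords n z \<noteq> {}"
      using S_set_iff_zero_coords_empty[OF Suc.prems] by blast
    have "survival n k (Suc m) z = (\<Sum>l\<in>{1..n-1}. step_prob n k z l * survival n k m (incr z l))"
      using False by simp
    also have "\<dots> \<le> (\<Sum>l\<in>{1..n-1}. step_prob n k z l * (\<rho> ^ m * 2 ^ nzeros n (incr z l)))"
    proof (rule sum_mono)
      fix l
      assume "l \<in> {1..n-1}"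
      then show "step_prob n k z l * survival n k m (incr z l) \<le> step_prob n k z l * (\<rho> ^ m * 2 ^ nzeros n (incr z l))"
        unfolding \<rho>_def by (intro mult_left_mono Suc.IH valid_incr[OF Suc.prems] step_prob_nonneg)
    qed
    also have "\<dots> = \<rho> ^ m * (\<Sum>l\<in>{1..n-1}. step_prob n k z l * 2 ^ nzeros n (incr z l))"
      by (simp add: sum_distrib_left algebra_simps)
    also have "\<dots> \<le> \<rho> ^ m * (\<rho> * 2 ^ nzeros n z)"
      using sum_step_prob_pow2_nzeros_le[OF \<open>zero_coords n z \<noteq> {}\<close>] \<open>0 \<le> \<rho>\<close>
      by (intro mult_left_mono) (simp_all add: \<rho>_def)
    also have "\<dots> = \<rho> ^ Suc m * 2 ^ nzeros n z"
      by (simp add: mult_ac)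
    finally show ?thesis
      by (simp only: \<rho>_def)
  qed
qed simp

lemma survival_tendsto_0:
  assumes "valid n z"
  shows "(\<lambda>m. survival n k m z) \<longlonglongrightarrow> 0"
proof (rule tendsto_sandwich[where f = "\<lambda>_. 0" and h = "\<lambda>m. (1 - 1 / (2 * real k)) ^ m * 2 ^ nzeros n z"])
  have "norm (1 - 1 / (2 * real k)) < 1"
    using k_pos by (simp add: field_simps)
  then show "(\<lambda>m. (1 - 1 / (2 * real k)) ^ m * 2 ^ nzeros n z) \<longlonglongrightarrow> 0"
    by (intro tendsto_mult_left_zero LIMSEQ_power_zero)
  show "\<forall>\<^sub>F m in sequentially. 0 \<le> survival n k m z"
    by (simp add: survival_nonneg)
  show "\<forall>\<^sub>F m in sequentially. survival n k m z \<le> (1 - 1 / (2 * real k)) ^ m * 2 ^ nzeros n z"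
    using survival_le[OF assms] by simp
qed simp

context
  fixes j :: nat and x :: "nat \<Rightarrow> nat"
  assumes valid_start: "valid n x" and zero_coords_start: "zero_coords n x = {1..j}" and one_le_j: "1 \<le> j"
begin

lemma start_notin_S_set: "x \<notin> S_set n"
  using S_set_iff_zero_coords_empty[OF valid_start] zero_coords_start one_le_j by simp

lemma start_eq_0_iff:
  assumes "i \<in> {1..n-1}"
  shows "x i = 0 \<longleftrightarrow> i \<in> {1..j}"
proof -
  have "x i = 0 \<longleftrightarrow> i \<in> zero_coords n x"
    using assms by (simp add: zero_coords_def)
  then show ?thesis
    by (simp only: zero_coords_start)
qed

lemma block_subset: "{1..j} \<subseteq> {1..n-1}"
  using zero_coords_start zero_coords_subset by blast

lemma start_add_mem_Sstar:
  assumes "r \<in> E_set n j"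
  shows "(\<lambda>i. x i + r i) \<in> Sstar n"
proof -
  have "1 \<le> x i + r i" if "i \<in> {1..n-1}" for i
  proof (cases "i \<in> {1..j}")
    case True
    then have "1 \<le> r i"
      using assms unfolding E_set_def by blast
    then show ?thesis
      by simp
  next
    case False
    then have "x i \<noteq> 0"
      using start_eq_0_iff[OF that] by blast
    then show ?thesis
      by simp
  qed
  moreover obtain l where "l \<in> {1..j}" and "r l = 1"
    using assms by (auto simp: E_set_def)
  moreover have "valid n (\<lambda>i. x i + r i)"
    using valid_start assms by (simp add: E_set_def valid_def)
  ultimately show ?thesis
    using block_subset start_eq_0_iff unfolding Sstar_def S_set_def by force
qed

lemma first_entry_start_nonzero_imp_E_set:
  assumes "first_entry n k m x y \<noteq> 0"
  shows "\<exists>r\<in>E_set n j. y = (\<lambda>i. x i + r i) \<and> rsum n r = m"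
proof -
  obtain r where r: "valid n r" "rsum n r = m" "y = (\<lambda>i. x i + r i)"
    using first_entry_nonzero_imp_increment[OF valid_start assms] by blast
  obtain l where "y \<in> S_set n" and "l \<in> {1..j}" and "y l = 1"
    using first_entry_nonzero_imp_hits_zero_coord[OF valid_start start_notin_S_set assms] zero_coords_start by blast
  have "x i = 0" and "1 \<le> y i" if "i \<in> {1..j}" for i
    using that block_subset start_eq_0_iff \<open>y \<in> S_set n\<close> by (auto simp: S_set_def)
  then have "r \<in> E_set n j"
    using r \<open>l \<in> {1..j}\<close> \<open>y l = 1\<close> by (auto simp: E_set_def)
  with r show ?thesis
    by blast
qed

lemma q_star_start_eq_entry_formula:
  assumes "r \<in> E_set n j"
  shows "q_star n k x (\<lambda>i. x i + r i) = entry_formula n k x r"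
proof -
  obtain l where "l \<in> {1..j}" and "r l = 1"
    using assms by (auto simp: E_set_def)
  then have "1 \<le> rsum n r"
    unfolding rsum_def using block_subset by (metis member_le_sum finite_atLeastAtMost subsetD zero_le)
  then obtain m where "rsum n r = Suc m"
    using Suc_le_D by auto
  moreover have "valid n r" and "\<forall>i\<in>zero_coords n x. 1 \<le> r i"
    using assms zero_coords_start by (simp_all add: E_set_def)
  ultimately show ?thesis
    using q_star_eq_first_entry[OF valid_start] first_entry_eq_entry_formula[OF valid_start] by simp
qed

lemma q_star_start_eq_0:
  assumes "y \<notin> (\<lambda>r i. x i + r i) ` E_set n j"
  shows "q_star n k x y = 0"
proof -
  have "first_entry n k m x y = 0" for m
    using first_entry_start_nonzero_imp_E_set assms by blast
  then show ?thesis
    by (simp add: q_star_def)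
qed

lemma sum_q_star_start_level:
  "(\<Sum>r\<in>{r\<in>E_set n j. rsum n r = m}. q_star n k x (\<lambda>i. x i + r i))
    = survival n k m x - survival n k (Suc m) x"
proof -
  let ?L = "{r\<in>E_set n j. rsum n r = m}"
  have "?L \<subseteq> {r. valid n r \<and> rsum n r \<le> m}"
    by (auto simp: E_set_def)
  then have "finite ?L"
    using finite_rsum_le by (rule finite_subset)
  have "inj (\<lambda>r i. x i + r i)"
    by (rule injI) (metis add_left_cancel ext)
  have "(\<Sum>r\<in>?L. q_star n k x (\<lambda>i. x i + r i)) = (\<Sum>r\<in>?L. first_entry n k m x (\<lambda>i. x i + r i))"
    using q_star_eq_first_entry[OF valid_start] by simp
  also have "\<dots> = (\<Sum>y\<in>(\<lambda>r i. x i + r i) ` ?L. first_entry n k m x y)"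
    using \<open>inj (\<lambda>r i. x i + r i)\<close> by (simp add: sum.reindex inj_on_subset[of _ UNIV])
  also have "\<dots> = survival n k m x - survival n k (Suc m) x"
  proof (rule sum_first_entry_eq_survival_diff[OF valid_start])
    show "finite ((\<lambda>r i. x i + r i) ` ?L)"
      using \<open>finite ?L\<close> by simp
    show "y \<in> (\<lambda>r i. x i + r i) ` ?L" if "first_entry n k m x y \<noteq> 0" for y
      using first_entry_start_nonzero_imp_E_set[OF that] by blast
  qed
  finally show ?thesis .
qed

lemma has_sum_q_star_start: "((\<lambda>r. q_star n k x (\<lambda>i. x i + r i)) has_sum 1) (E_set n j)"
proof (rule nonneg_has_sum_exhaustion[where B = "\<lambda>M. {r\<in>E_set n j. rsum n r < M}"])
  let ?f = "\<lambda>r. q_star n k x (\<lambda>i. x i + r i)"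
  show "0 \<le> ?f r" for r
    unfolding q_star_eq_first_entry[OF valid_start] by (rule first_entry_nonneg[OF valid_start])
  show finite: "finite {r\<in>E_set n j. rsum n r < M}" for M
    by (rule finite_subset[OF _ finite_rsum_le[of n M]]) (auto simp: E_set_def)
  show "incseq (\<lambda>M. {r\<in>E_set n j. rsum n r < M})"
    by (auto simp: incseq_def)
  show "\<exists>M. F \<subseteq> {r\<in>E_set n j. rsum n r < M}" if "finite F" and "F \<subseteq> E_set n j" for F
  proof
    show "F \<subseteq> {r\<in>E_set n j. rsum n r < Suc (Max (insert 0 (rsum n ` F)))}"
      using that by (auto simp: less_Suc_eq_le)
  qed
  have "sum ?f {r\<in>E_set n j. rsum n r < M} = 1 - survival n k M x" for M
  proof -
    have "sum ?f {r\<in>E_set n j. rsum n r < M}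
        = (\<Sum>m<M. sum ?f {r\<in>{r\<in>E_set n j. rsum n r < M}. rsum n r = m})"
      by (rule sum.group[symmetric]) (auto simp: finite)
    also have "\<dots> = (\<Sum>m<M. sum ?f {r\<in>E_set n j. rsum n r = m})"
      by (intro sum.cong refl arg_cong[where f = "sum ?f"]) auto
    also have "\<dots> = 1 - survival n k M x"
      using sum_lessThan_telescope'[of "\<lambda>m. survival n k m x" M]
      by (simp add: sum_q_star_start_level del: survival.simps(2))
    finally show ?thesis .
  qed
  moreover have "(\<lambda>M. 1 - survival n k M x) \<longlonglongrightarrow> 1 - 0"
    by (intro tendsto_diff tendsto_const survival_tendsto_0[OF valid_start])
  ultimately show "(\<lambda>M. sum ?f {r\<in>E_set n j. rsum n r < M}) \<longlonglongrightarrow> 1"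
    by simp
qed blast

end

end

theorem lemma7p3:
  fixes n k j :: nat and x :: "nat \<Rightarrow> nat"
  assumes "3 \<le> n" and "n \<le> k" and "1 \<le> j" and "j \<le> n - 1"
    and "valid n x" and "\<forall>i\<in>{1..j}. x i = 0" and "\<forall>i\<in>{j+1..n-1}. 1 \<le> x i"
  shows "(\<forall>r\<in>E_set n j. (\<lambda>i. x i + r i) \<in> Sstar n \<and>
           q_star n k x (\<lambda>i. x i + r i) =
             real ((k - n + j + 1) choose (k - n + 1))
             * (fact (rsum n r - 1) / (\<Prod>i\<in>{1..n-1}. fact (r i)))
             * (1 / real k) ^ (rsum n r)
             * real (card {l\<in>{1..j}. r l = 1}))
       \<and> ((\<lambda>r. q_star n k x (\<lambda>i. x i + r i)) has_sum 1) (E_set n j)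
       \<and> (\<forall>x'\<in>Sstar n. \<not> (\<exists>r\<in>E_set n j. x' = (\<lambda>i. x i + r i)) \<longrightarrow> q_star n k x x' = 0)"
proof -
  have "2 \<le> n"
    using assms(1) by simp
  have zeros: "zero_coords n x = {1..j}"
    using assms(4,6,7) by (rule zero_coords_eq_block)
  note start = \<open>2 \<le> n\<close> assms(2) assms(5) zeros assms(3)
  show ?thesis
    unfolding entry_formula_block[OF zeros, symmetric]
    using start_add_mem_Sstar[OF start] q_star_start_eq_entry_formula[OF start]
      has_sum_q_star_start[OF start] q_star_start_eq_0[OF start]
    by blast
qed

end
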